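(* Let $D=\{z\in\mathbb C: |z|<R\}$ with $0<R<\infty$, and let $d\mu(z)=m(z)\,d\lambda(z)$, where $m\ge 0$ is a radially symmetric weight ($m(z)$ depends only on $|z|$) such that the monomials $\{z^n\}_{n\in\mathbb N_0}$ belong to $A^2(D,d\mu)$ and form an orthogonal basis of $A^2(D,d\mu)$. Put $c_n^2=\int_D |z|^{2n}\,d\mu(z)$. Then the canonical solution operator $S: A^2(D,d\mu)\to L^2(D,d\mu)$ to $\overline\partial$ is a Hilbert–Schmidt operator if and only if $\lim_{n\to\infty} \frac{c_{n+1}^2}{c_n^2}<\infty$ (i.e. the sequence $c_{n+1}^2/c_n^2$ converges to a finite limit).
   Context: $d\lambda$ denotes Lebesgue measure. $A^2(D,d\mu)$ is the (weighted Bergman) space of holomorphic functions $g$ on $D$ with $\int_D|g|^2\,d\mu<\infty$, a closed subspace of $L^2(D,d\mu)$. The canonical solution operator $S$ assigns to $g\in A^2(D,d\mu)$ the unique function $u=S(g)\in L^2(D,d\mu)$ with $\overline\partial u=g$ (in the distributional sense) and $u\perp A^2(D,d\mu)$ in $L^2(D,d\mu)$; equivalently $S(g)=\overline z g-P(\overline z g)$ where $P$ is the orthogonal (Bergman) projection of $L^2(D,d\mu)$ onto $A^2(D,d\mu)$. *)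

theory Defs
  imports "HOL-Analysis.Analysis"
begin

definition wmeasure :: "(complex \<Rightarrow> real) \<Rightarrow> complex set \<Rightarrow> complex measure" where
  "wmeasure m D = density lborel (\<lambda>z. ennreal (m z * indicator D z))"

text \<open>Square-integrable functions L^2(D, mu) (represented by functions; a.e. classes implicit).\<close>
definition L2 :: "complex measure \<Rightarrow> (complex \<Rightarrow> complex) set" where
  "L2 M = {f. f \<in> borel_measurable M \<and> integrable M (\<lambda>z. (cmod (f z))\<^sup>2)}"

definition L2_inner :: "complex measure \<Rightarrow> (complex \<Rightarrow> complex) \<Rightarrow> (complex \<Rightarrow> complex) \<Rightarrow> complex" where
  "L2_inner M f g = integral\<^sup>L M (\<lambda>z. f z * cnj (g z))"

definition L2_norm :: "complex measure \<Rightarrow> (complex \<Rightarrow> complex) \<Rightarrow> real" where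
  "L2_norm M f = sqrt (integral\<^sup>L M (\<lambda>z. (cmod (f z))\<^sup>2))"

definition A2 :: "complex measure \<Rightarrow> complex set \<Rightarrow> (complex \<Rightarrow> complex) set" where
  "A2 M D = {g. g holomorphic_on D \<and> g \<in> L2 M}"

text \<open>u is the canonical solution of dbar u = g: u = conj(z) g - P(conj(z) g), i.e.
  u is in L^2, conj(z) g - u lies in A^2, and u is orthogonal to A^2.\<close>
definition canonical_solution ::
  "complex measure \<Rightarrow> complex set \<Rightarrow> (complex \<Rightarrow> complex) \<Rightarrow> (complex \<Rightarrow> complex) \<Rightarrow> bool" where
  "canonical_solution M D g u \<longleftrightarrow>
     u \<in> L2 M \<and>
     (\<exists>h \<in> A2 M D. \<forall>z \<in> D. u z = cnj z * g z - h z) \<and>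
     (\<forall>f \<in> A2 M D. L2_inner M u f = 0)"

definition canon_sol_op ::
  "complex measure \<Rightarrow> complex set \<Rightarrow> (complex \<Rightarrow> complex) \<Rightarrow> (complex \<Rightarrow> complex)" where
  "canon_sol_op M D g = (SOME u. canonical_solution M D g u)"

definition A2_orthonormal_basis ::
  "complex measure \<Rightarrow> complex set \<Rightarrow> (complex \<Rightarrow> complex) set \<Rightarrow> bool" where
  "A2_orthonormal_basis M D B \<longleftrightarrow>
     B \<subseteq> A2 M D \<and>
     (\<forall>e \<in> B. L2_inner M e e = 1) \<and>
     (\<forall>e \<in> B. \<forall>e' \<in> B. e \<noteq> e' \<longrightarrow> L2_inner M e e' = 0) \<and>
     (\<forall>g \<in> A2 M D. (\<forall>e \<in> B. L2_inner M g e = 0) \<longrightarrow> (AE z in M. g z = 0))"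

definition hilbert_schmidt_A2 ::
  "complex measure \<Rightarrow> complex set \<Rightarrow> ((complex \<Rightarrow> complex) \<Rightarrow> (complex \<Rightarrow> complex)) \<Rightarrow> bool" where
  "hilbert_schmidt_A2 M D T \<longleftrightarrow>
     (\<exists>B. A2_orthonormal_basis M D B \<and> (\<lambda>e. (L2_norm M (T e))\<^sup>2) summable_on B)"

definition monomials_orthogonal_basis :: "complex measure \<Rightarrow> complex set \<Rightarrow> bool" where
  "monomials_orthogonal_basis M D \<longleftrightarrow>
     (\<forall>n::nat. (\<lambda>z. z ^ n) \<in> A2 M D) \<and>
     (\<forall>n::nat. L2_inner M (\<lambda>z. z ^ n) (\<lambda>z. z ^ n) \<noteq> 0) \<and>
     (\<forall>n k::nat. n \<noteq> k \<longrightarrow> L2_inner M (\<lambda>z. z ^ n) (\<lambda>z. z ^ k) = 0) \<and>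
     (\<forall>g \<in> A2 M D. (\<forall>n::nat. L2_inner M g (\<lambda>z. z ^ n) = 0) \<longrightarrow> (AE z in M. g z = 0))"

end

theory Submission
  imports Defs "HOL-Complex_Analysis.Complex_Analysis"
begin

(* With a radial weight the normalized monomials e_n = z^n / c_n are an orthonormal basis of A^2,
   and rotation invariance of the measure forces the Bergman projection of cnj z * e_n to be a
   multiple of z^(n-1), namely (c_n^2 / c_(n-1)^2) z^(n-1) / c_n.  Hence
     ||S e_n||^2 = c_(n+1)^2 / c_n^2 - c_n^2 / c_(n-1)^2,
   and the Hilbert-Schmidt sum telescopes to the limit of c_(n+1)^2 / c_n^2.  On a bounded disc
   this ratio is increasing (its increments are the norms above) and bounded by R^2, so both sides
   of the equivalence hold.  That S e_n is orthogonal to all of A^2, not only to the monomials, is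
   seen by expanding f in A^2 into its Taylor series on smaller discs, where rotation invariance
   kills every coefficient but one. *)

section \<open>Rotation invariance of Lebesgue measure on the plane\<close>

lemma distr_lborel_orthogonal_transformation:
  fixes T :: "real^'n::{finite,wellorder} \<Rightarrow> real^'n::_"
  assumes T: "orthogonal_transformation T"
  shows "distr lborel borel T = lborel"
proof (rule lborel_eqI[symmetric])
  have "linear T"
    using T orthogonal_transformation_linear by blast
  then have contT: "continuous_on UNIV T"
    by (intro linear_continuous_on) (simp add: linear_conv_bounded_linear)
  then have [measurable]: "T \<in> borel_measurable borel"
    by (intro borel_measurable_continuous_onI)
  fix l u :: "(real, 'n) vec"
  assume le: "\<And>b. b \<in> Basis \<Longrightarrow> l \<bullet> b \<le> u \<bullet> b"
  have pre: "T -` box l u = inv T ` box l u"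
    using orthogonal_transformation_bij[OF T] by (simp add: bij_vimage_eq_inv_image)
  have "open (T -` box l u)"
    using contT by (auto intro: open_vimage)
  then have "emeasure (distr lborel borel T) (box l u) = emeasure lebesgue (inv T ` box l u)"
    by (simp add: emeasure_distr borel_open pre)
  also have "\<dots> = measure lebesgue (inv T ` box l u)"
    using measurable_orthogonal_image[OF orthogonal_transformation_inv[OF T]]
    by (simp add: emeasure_eq_measure2)
  also have "\<dots> = (\<Prod>b\<in>Basis. (u - l) \<bullet> b)"
    using le orthogonal_transformation_inv[OF T]
    by (simp add: measure_orthogonal_image measure_lborel_box prod_nonneg)
  finally show "emeasure (distr lborel borel T) (box l u) = (\<Prod>b\<in>Basis. (u - l) \<bullet> b)" .
qed simp

(* The library has invariance of Lebesgue measure under orthogonal maps only on real^'n, so the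
   plane is transported there. *)

definition complex_to_vec :: "complex \<Rightarrow> real^2" where
  "complex_to_vec z = (\<chi> i. if i = 1 then Re z else Im z)"

definition vec_to_complex :: "real^2 \<Rightarrow> complex" where
  "vec_to_complex v = Complex (v$1) (v$2)"

lemma vec_to_complex_to_vec [simp]: "vec_to_complex (complex_to_vec z) = z"
  by (simp add: vec_to_complex_def complex_to_vec_def complex_eq_iff)

lemma linear_complex_to_vec: "linear complex_to_vec"
  by (auto simp: linear_iff complex_to_vec_def vec_eq_iff)

lemma linear_vec_to_complex: "linear vec_to_complex"
  by (auto simp: linear_iff vec_to_complex_def complex_eq_iff)

lemma complex_to_vec_measurable [measurable]: "complex_to_vec \<in> borel_measurable borel"
  using linear_complex_to_vec
  by (intro borel_measurable_continuous_onI linear_continuous_on) (simp add: linear_conv_bounded_linear)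

lemma vec_to_complex_measurable [measurable]: "vec_to_complex \<in> borel_measurable borel"
  using linear_vec_to_complex
  by (intro borel_measurable_continuous_onI linear_continuous_on) (simp add: linear_conv_bounded_linear)

lemma norm_complex_to_vec [simp]: "norm (complex_to_vec z) = norm z"
  by (simp add: norm_vec_def L2_set_def UNIV_2 complex_to_vec_def norm_complex_def)

lemma norm_vec_to_complex [simp]: "norm (vec_to_complex v) = norm v"
  by (simp add: norm_vec_def L2_set_def UNIV_2 vec_to_complex_def norm_complex_def)

lemma distr_lborel_complex_to_vec: "distr lborel borel complex_to_vec = (lborel :: (real^2) measure)"
proof (rule lborel_eqI[symmetric])
  have Basis_vec2: "(Basis :: (real^2) set) = {axis 1 1, axis 2 1}"
  proof -
    have "axis i (1::real) \<in> {axis 1 1, axis 2 1}" for i :: 2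
      using exhaust_2[of i] by auto
    then show ?thesis by (auto simp: Basis_vec_def)
  qed
  fix l u :: "real^2"
  assume le: "\<And>b. b \<in> Basis \<Longrightarrow> l \<bullet> b \<le> u \<bullet> b"
  have "complex_to_vec -` box l u = box (vec_to_complex l) (vec_to_complex u)"
    by (auto simp: mem_box Basis_vec2 Basis_complex_def inner_axis complex_to_vec_def vec_to_complex_def)
  then have "emeasure (distr lborel borel complex_to_vec) (box l u) =
             emeasure lborel (box (vec_to_complex l) (vec_to_complex u))"
    by (simp add: emeasure_distr)
  also have "\<dots> = (\<Prod>b\<in>Basis. (u - l) \<bullet> b)"
    using le[of "axis 1 1"] le[of "axis 2 1"]
    by (subst emeasure_lborel_box)
       (auto simp: Basis_vec2 inner_axis Basis_complex_def vec_to_complex_def axis_eq_axis)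
  finally show "emeasure (distr lborel borel complex_to_vec) (box l u) = (\<Prod>b\<in>Basis. (u - l) \<bullet> b)" .
qed simp

lemma distr_lborel_vec_to_complex: "distr lborel borel vec_to_complex = (lborel :: complex measure)"
proof -
  have "distr lborel borel vec_to_complex =
        distr (distr lborel borel complex_to_vec) borel vec_to_complex"
    by (simp add: distr_lborel_complex_to_vec)
  also have "\<dots> = lborel"
    by (simp add: distr_distr comp_def distr_id2)
  finally show ?thesis .
qed

lemma distr_lborel_complex_rotation:
  fixes c :: complex
  assumes c: "norm c = 1"
  shows "distr lborel borel (\<lambda>z. c * z) = lborel"
proof -
  define T where "T v = complex_to_vec (c * vec_to_complex v)" for v
  have "orthogonal_transformation T"
    unfolding orthogonal_transformation_isometry
  proof safe
    show "T 0 = 0"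
      using linear_vec_to_complex linear_complex_to_vec by (simp add: T_def linear_0)
    fix x y
    have "T x - T y = complex_to_vec (c * vec_to_complex (x - y))"
      using linear_vec_to_complex linear_complex_to_vec
      by (simp add: T_def linear_diff ring_distribs)
    then show "dist (T x) (T y) = dist x y"
      by (simp add: dist_norm norm_mult c)
  qed
  then have T_lborel: "distr lborel borel T = lborel"
    by (rule distr_lborel_orthogonal_transformation)
  have [measurable]: "T \<in> borel_measurable borel"
    unfolding T_def by measurable
  have "distr lborel borel (\<lambda>z. c * z) = distr lborel borel ((\<lambda>z. c * z) \<circ> vec_to_complex)"
    by (simp add: distr_distr flip: distr_lborel_vec_to_complex)
  also have "(\<lambda>z. c * z) \<circ> vec_to_complex = vec_to_complex \<circ> T"
    by (simp add: T_def fun_eq_iff)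
  also have "distr lborel borel (vec_to_complex \<circ> T) = distr (distr lborel borel T) borel vec_to_complex"
    by (simp add: distr_distr)
  also have "\<dots> = lborel"
    by (simp add: T_lborel distr_lborel_vec_to_complex)
  finally show ?thesis .
qed

section \<open>Taylor expansion at the origin\<close>

definition taylor_coeff :: "(complex \<Rightarrow> complex) \<Rightarrow> nat \<Rightarrow> complex" where
  "taylor_coeff f j = (deriv ^^ j) f 0 / fact j"

lemma taylor_coeff_sums:
  assumes "f holomorphic_on ball 0 R" "z \<in> ball 0 R"
  shows "(\<lambda>j. taylor_coeff f j * z ^ j) sums f z"
  using holomorphic_power_series[OF assms] by (simp add: taylor_coeff_def)

lemma summable_norm_taylor_coeff:
  assumes "f holomorphic_on ball 0 R" "0 \<le> r" "r < R"
  shows "summable (\<lambda>j. norm (taylor_coeff f j) * r ^ j)"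
proof -
  define x where "x = complex_of_real ((r + R) / 2)"
  have "x \<in> ball 0 R"
    unfolding x_def mem_ball dist_0_norm norm_of_real using assms by simp
  then have "summable (\<lambda>j. taylor_coeff f j * x ^ j)"
    using taylor_coeff_sums[OF assms(1)] sums_summable by blast
  moreover have "norm (complex_of_real r) < norm x"
    unfolding x_def norm_of_real using assms by simp
  ultimately have "summable (\<lambda>j. norm (taylor_coeff f j * complex_of_real r ^ j))"
    by (rule powser_insidea)
  then show ?thesis
    using assms by (simp add: norm_mult norm_power)
qed

lemma norm_taylor_partial_sum_le:
  assumes "f holomorphic_on ball 0 R" "0 \<le> r" "r < R" "norm z \<le> r"
  shows "norm (\<Sum>j<N. taylor_coeff f j * z ^ j) \<le> (\<Sum>j. norm (taylor_coeff f j) * r ^ j)"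
proof -
  have "norm (\<Sum>j<N. taylor_coeff f j * z ^ j) \<le> (\<Sum>j<N. norm (taylor_coeff f j) * r ^ j)"
    using assms(4) by (auto simp: norm_mult norm_power intro!: sum_norm_le mult_left_mono power_mono)
  also have "\<dots> \<le> (\<Sum>j. norm (taylor_coeff f j) * r ^ j)"
    using summable_norm_taylor_coeff[OF assms(1-3)] assms(2) by (intro sum_le_suminf) auto
  finally show ?thesis .
qed

section \<open>Radial weights\<close>

lemma borel_measurable_cnj [measurable (raw)]:
  "f \<in> borel_measurable M \<Longrightarrow> (\<lambda>x. cnj (f x)) \<in> borel_measurable M"
  by (rule borel_measurable_continuous_on[OF continuous_on_cnj[OF continuous_on_id]])

lemma ball_in_borel [measurable]: "ball (0::complex) r \<in> sets borel"
  by simp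

lemma radii_tendsto:
  fixes R :: real
  assumes "0 < R"
  obtains r :: "nat \<Rightarrow> real" where "\<And>N. 0 \<le> r N" "\<And>N. r N < R" "r \<longlonglongrightarrow> R"
proof -
  define r where "r N = R - R / 2 * inverse (real (Suc N))" for N
  have step: "0 < R / 2 * inverse (real (Suc N))" "R / 2 * inverse (real (Suc N)) \<le> R / 2" for N
    using assms by (simp_all add: mult_left_le inverse_le_1_iff)
  have "0 \<le> r N" "r N < R" for N
    using step[of N] assms unfolding r_def by linarith+
  moreover have "(\<lambda>N. R - R / 2 * inverse (real (Suc N))) \<longlonglongrightarrow> R - R / 2 * 0"
    by (intro tendsto_intros LIMSEQ_inverse_real_of_nat)
  then have "r \<longlonglongrightarrow> R"
    by (simp add: r_def[abs_def])
  ultimately show ?thesis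
    using that by blast
qed

lemma continuous_bounded_on_ball:
  fixes f :: "complex \<Rightarrow> 'a::real_normed_vector"
  assumes "continuous_on UNIV f"
  obtains B where "\<And>z. z \<in> ball 0 R \<Longrightarrow> norm (f z) \<le> B"
proof -
  have "compact (f ` cball 0 R)"
    using assms by (intro compact_continuous_image) (auto intro: continuous_on_subset)
  then obtain B where B: "\<forall>y \<in> f ` cball 0 R. norm y \<le> B"
    using compact_imp_bounded bounded_iff by metis
  show ?thesis
  proof (rule that)
    fix z :: complex assume "z \<in> ball 0 R"
    then show "norm (f z) \<le> B"
      using B by auto
  qed
qed

locale radial_weight =
  fixes R :: real and m :: "complex \<Rightarrow> real"
  assumes R_pos: "0 < R"
    and m_measurable [measurable]: "m \<in> borel_measurable borel"
    and m_nonneg: "\<And>z. m z \<ge> 0"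
    and m_radial: "\<And>z w. cmod z = cmod w \<Longrightarrow> m z = m w"
begin

abbreviation "D \<equiv> ball (0::complex) R"
abbreviation "M \<equiv> wmeasure m D"

lemma sets_M [simp, measurable_cong]: "sets M = sets borel"
  by (simp add: wmeasure_def)

lemma AE_in_disc: "AE z in M. z \<in> D"
  unfolding wmeasure_def by (subst AE_density) (auto split: split_indicator)

lemma integral_rotation:
  fixes F :: "complex \<Rightarrow> complex"
  assumes c: "norm c = 1" and [measurable]: "F \<in> borel_measurable borel"
  shows "integral\<^sup>L M (\<lambda>z. F (c * z)) = integral\<^sup>L M F"
proof -
  define H where "H = (\<lambda>z. (m z * indicator D z) *\<^sub>R F z)"
  have [measurable]: "H \<in> borel_measurable borel"
    unfolding H_def by measurable
  have integral_M: "integral\<^sup>L M G = integral\<^sup>L lborel (\<lambda>z. (m z * indicator D z) *\<^sub>R G z)"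
    if [measurable]: "G \<in> borel_measurable borel" for G :: "complex \<Rightarrow> complex"
    unfolding wmeasure_def by (rule integral_density) (auto simp: m_nonneg)
  have "(m z * indicator D z) *\<^sub>R F (c * z) = H (c * z)" for z
    using m_radial[of "c * z" z] by (simp add: H_def norm_mult c indicator_def)
  then have "integral\<^sup>L M (\<lambda>z. F (c * z)) = integral\<^sup>L lborel (\<lambda>z. H (c * z))"
    by (simp add: integral_M)
  also have "\<dots> = integral\<^sup>L (distr lborel borel (\<lambda>z. c * z)) H"
    by (simp add: integral_distr)
  also have "\<dots> = integral\<^sup>L M F"
    using integral_M[of F] by (simp add: distr_lborel_complex_rotation[OF c] H_def)
  finally show ?thesis .
qed

lemma integral_homogeneous_eq_0:
  fixes F :: "complex \<Rightarrow> complex"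
  assumes [measurable]: "F \<in> borel_measurable borel"
    and homogeneous: "\<And>c z. norm c = 1 \<Longrightarrow> F (c * z) = c ^ p * cnj c ^ q * F z"
    and "p \<noteq> q"
  shows "integral\<^sup>L M F = 0"
proof -
  \<comment> \<open>rotating by the angle \<open>pi / (p - q)\<close> multiplies the integrand by \<open>-1\<close>\<close>
  define d where "d = real p - real q"
  define c where "c = cis (pi / d)"
  have "real p * t + real q * - t = d * t" for t
    by (simp add: d_def algebra_simps)
  then have "real p * (pi / d) + real q * - (pi / d) = d * (pi / d)" .
  also have "\<dots> = pi"
    using \<open>p \<noteq> q\<close> by (simp add: d_def)
  finally have "real p * (pi / d) + real q * - (pi / d) = pi" .
  then have "c ^ p * cnj c ^ q = cis pi"
    by (simp only: c_def cis_cnj Complex.DeMoivre cis_mult)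
  then have rotation_sign: "c ^ p * cnj c ^ q = -1"
    by simp
  have "norm c = 1"
    by (simp add: c_def)
  then have "integral\<^sup>L M F = integral\<^sup>L M (\<lambda>z. F (c * z))"
    using integral_rotation by simp
  also have "\<dots> = integral\<^sup>L M (\<lambda>z. - F z)"
    using \<open>norm c = 1\<close> by (simp add: homogeneous rotation_sign)
  finally show ?thesis
    by simp
qed

lemma L2_measurable: "f \<in> L2 M \<Longrightarrow> f \<in> borel_measurable borel"
  by (simp add: L2_def measurable_cong_sets[OF sets_M refl])

lemma integrable_mult_cnj_L2:
  assumes f: "f \<in> L2 M" and g: "g \<in> L2 M"
  shows "integrable M (\<lambda>z. f z * cnj (g z))"
proof (rule Bochner_Integration.integrable_bound)
  show "integrable M (\<lambda>z. (cmod (f z))\<^sup>2 + (cmod (g z))\<^sup>2)"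
    using f g by (simp add: L2_def)
  have [measurable]: "f \<in> borel_measurable borel" "g \<in> borel_measurable borel"
    using f g by (auto intro: L2_measurable)
  show "(\<lambda>z. f z * cnj (g z)) \<in> borel_measurable M"
    by measurable
  have "cmod (f z) * cmod (g z) \<le> (cmod (f z))\<^sup>2 + (cmod (g z))\<^sup>2" for z
    using sum_squares_bound[of "cmod (f z)" "cmod (g z)"]
      mult_nonneg_nonneg[OF norm_ge_zero[of "f z"] norm_ge_zero[of "g z"]] by linarith
  then show "AE z in M. norm (f z * cnj (g z)) \<le> norm ((cmod (f z))\<^sup>2 + (cmod (g z))\<^sup>2)"
    by (simp add: norm_mult)
qed

lemma L2_diff:
  assumes f: "f \<in> L2 M" and g: "g \<in> L2 M"
  shows "(\<lambda>z. f z - g z) \<in> L2 M"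
proof -
  have [measurable]: "f \<in> borel_measurable borel" "g \<in> borel_measurable borel"
    using f g by (auto intro: L2_measurable)
  have bound: "(cmod (f z - g z))\<^sup>2 \<le> 2 * (cmod (f z))\<^sup>2 + 2 * (cmod (g z))\<^sup>2" for z
  proof -
    have "(cmod (f z - g z))\<^sup>2 \<le> (cmod (f z) + cmod (g z))\<^sup>2"
      by (rule power_mono[OF norm_triangle_ineq4]) simp
    also have "\<dots> \<le> 2 * (cmod (f z))\<^sup>2 + 2 * (cmod (g z))\<^sup>2"
      unfolding power2_sum using sum_squares_bound[of "cmod (f z)" "cmod (g z)"] by linarith
    finally show ?thesis .
  qed
  have "integrable M (\<lambda>z. (cmod (f z - g z))\<^sup>2)"
  proof (rule Bochner_Integration.integrable_bound)
    show "integrable M (\<lambda>z. 2 * (cmod (f z))\<^sup>2 + 2 * (cmod (g z))\<^sup>2)"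
      using f g by (simp add: L2_def)
    show "AE z in M. norm ((cmod (f z - g z))\<^sup>2) \<le> norm (2 * (cmod (f z))\<^sup>2 + 2 * (cmod (g z))\<^sup>2)"
      using bound by simp
  qed measurable
  moreover have "(\<lambda>z. f z - g z) \<in> borel_measurable M"
    by measurable
  ultimately show ?thesis
    by (simp add: L2_def)
qed

lemma L2_inner_diff_left:
  assumes "f \<in> L2 M" "g \<in> L2 M" "h \<in> L2 M"
  shows "L2_inner M (\<lambda>z. f z - g z) h = L2_inner M f h - L2_inner M g h"
  using integrable_mult_cnj_L2[OF assms(1,3)] integrable_mult_cnj_L2[OF assms(2,3)]
  by (simp add: L2_inner_def left_diff_distrib)

lemma L2_inner_diff_right:
  assumes "f \<in> L2 M" "g \<in> L2 M" "h \<in> L2 M"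
  shows "L2_inner M f (\<lambda>z. g z - h z) = L2_inner M f g - L2_inner M f h"
  using integrable_mult_cnj_L2[OF assms(1,2)] integrable_mult_cnj_L2[OF assms(1,3)]
  by (simp add: L2_inner_def right_diff_distrib)

lemma tendsto_integral_restrict_ball:
  fixes F :: "complex \<Rightarrow> complex"
  assumes r: "r \<longlonglongrightarrow> R" and [measurable]: "F \<in> borel_measurable borel"
    and "integrable M G" and bound: "\<And>z. z \<in> D \<Longrightarrow> norm (F z) \<le> G z"
  shows "(\<lambda>N. integral\<^sup>L M (\<lambda>z. indicator (ball 0 (r N)) z * F z)) \<longlonglongrightarrow> integral\<^sup>L M F"
proof (rule integral_dominated_convergence[where w = G])
  show "AE z in M. (\<lambda>N. indicator (ball 0 (r N)) z * F z) \<longlonglongrightarrow> F z"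
    using AE_in_disc
  proof eventually_elim
    fix z assume "z \<in> D"
    then have "eventually (\<lambda>N. cmod z < r N) sequentially"
      by (intro order_tendstoD(1)[OF r]) simp
    then have "eventually (\<lambda>N. indicator (ball 0 (r N)) z * F z = F z) sequentially"
      by eventually_elim (simp add: indicator_def)
    then show "(\<lambda>N. indicator (ball 0 (r N)) z * F z) \<longlonglongrightarrow> F z"
      by (rule tendsto_eventually)
  qed
  show "AE z in M. norm (indicator (ball 0 (r N)) z * F z) \<le> G z" for N
    using AE_in_disc by eventually_elim (use bound order_trans[OF norm_ge_zero] in \<open>auto simp: indicator_def\<close>)
qed (use \<open>integrable M G\<close> in simp_all)

lemma canonical_solution_unique:
  assumes v: "canonical_solution M D g v" and w: "canonical_solution M D g w"
  shows "AE z in M. v z = w z"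
proof -
  obtain h1 where h1: "h1 \<in> A2 M D" "\<And>z. z \<in> D \<Longrightarrow> v z = cnj z * g z - h1 z"
    using v unfolding canonical_solution_def by blast
  obtain h2 where h2: "h2 \<in> A2 M D" "\<And>z. z \<in> D \<Longrightarrow> w z = cnj z * g z - h2 z"
    using w unfolding canonical_solution_def by blast
  have L2: "v \<in> L2 M" "w \<in> L2 M" "h1 \<in> L2 M" "h2 \<in> L2 M"
    using v w h1 h2 by (auto simp: canonical_solution_def A2_def)
  then have diff_L2: "(\<lambda>z. v z - w z) \<in> L2 M"
    by (intro L2_diff)
  note [measurable] = L2[THEN L2_measurable]
  \<comment> \<open>\<open>v - w\<close> is orthogonal to \<open>h2 - h1\<close>, which coincides with it on \<open>D\<close>\<close>
  have "L2_inner M (\<lambda>z. v z - w z) (\<lambda>z. h2 z - h1 z) =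
          L2_inner M v (\<lambda>z. h2 z - h1 z) - L2_inner M w (\<lambda>z. h2 z - h1 z)"
    using L2 by (intro L2_inner_diff_left L2_diff)
  also have "\<dots> = (L2_inner M v h2 - L2_inner M v h1) - (L2_inner M w h2 - L2_inner M w h1)"
    using L2 by (simp only: L2_inner_diff_right)
  also have "\<dots> = 0"
    using v w h1 h2 by (simp add: canonical_solution_def)
  finally have orth: "L2_inner M (\<lambda>z. v z - w z) (\<lambda>z. h2 z - h1 z) = 0" .
  have AE_eq: "AE z in M. complex_of_real ((cmod (v z - w z))\<^sup>2) = (v z - w z) * cnj (h2 z - h1 z)"
    using AE_in_disc
  proof eventually_elim
    fix z assume "z \<in> D"
    then have "v z - w z = h2 z - h1 z"
      using h1 h2 by simp
    then show "complex_of_real ((cmod (v z - w z))\<^sup>2) = (v z - w z) * cnj (h2 z - h1 z)"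
      by (simp only: complex_norm_square)
  qed
  have "integral\<^sup>L M (\<lambda>z. complex_of_real ((cmod (v z - w z))\<^sup>2)) =
          L2_inner M (\<lambda>z. v z - w z) (\<lambda>z. h2 z - h1 z)"
    unfolding L2_inner_def by (rule integral_cong_AE[OF _ _ AE_eq]; measurable)
  with orth have "complex_of_real (integral\<^sup>L M (\<lambda>z. (cmod (v z - w z))\<^sup>2)) = 0"
    by (simp only: integral_complex_of_real)
  then have "AE z in M. (cmod (v z - w z))\<^sup>2 = 0"
    using diff_L2 by (simp add: L2_def integral_nonneg_eq_0_iff_AE)
  then show ?thesis
    by eventually_elim simp
qed

end

locale finite_radial_weight = radial_weight +
  assumes finite_M: "finite_measure (wmeasure m (ball 0 R))"
begin

lemma integrable_bounded_on_disc:
  fixes f :: "complex \<Rightarrow> 'a::{banach,second_countable_topology}"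
  assumes "f \<in> borel_measurable borel" and "\<And>z. z \<in> D \<Longrightarrow> norm (f z) \<le> B"
  shows "integrable M f"
proof (rule finite_measure.integrable_const_bound[OF finite_M])
  show "AE z in M. norm (f z) \<le> B"
    using AE_in_disc by eventually_elim (rule assms(2))
qed (use assms(1) in simp)

lemma L2_bounded_on_disc:
  assumes [measurable]: "f \<in> borel_measurable borel" and bound: "\<And>z. z \<in> D \<Longrightarrow> norm (f z) \<le> B"
  shows "f \<in> L2 M"
  unfolding L2_def
proof safe
  show "integrable M (\<lambda>z. (cmod (f z))\<^sup>2)"
    by (rule integrable_bounded_on_disc[where B = "B\<^sup>2"]) (auto simp: bound power_mono)
qed simp

lemma L2_continuous:
  assumes "continuous_on UNIV f"
  shows "f \<in> L2 M"
proof -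
  obtain B where "\<And>z. z \<in> D \<Longrightarrow> norm (f z) \<le> B"
    using continuous_bounded_on_ball[OF assms] by blast
  then show ?thesis
    using assms by (intro L2_bounded_on_disc borel_measurable_continuous_onI)
qed

lemma integrable_L2:
  assumes "f \<in> L2 M"
  shows "integrable M f"
proof -
  have "integrable M (\<lambda>z. f z * cnj 1)"
    using assms finite_measure.integrable_const[OF finite_M, of 1]
    by (intro integrable_mult_cnj_L2) (auto intro: L2_bounded_on_disc[where B = 1])
  then show ?thesis
    by simp
qed

lemma integrable_restrict_ball_mult_cnj_power:
  assumes w_bound: "\<And>z. z \<in> D \<Longrightarrow> norm (w z) \<le> B" and [measurable]: "w \<in> borel_measurable borel"
  shows "integrable M (\<lambda>z. indicator (ball 0 r) z * w z * cnj (z ^ j))"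
proof (rule integrable_bounded_on_disc[where B = "B * R ^ j"])
  fix z assume "z \<in> D"
  moreover have "0 \<le> B"
    using w_bound[of 0] R_pos by (auto intro: order_trans[OF norm_ge_zero])
  ultimately show "norm (indicator (ball 0 r) z * w z * cnj (z ^ j)) \<le> B * R ^ j"
    using w_bound[of z] R_pos by (auto simp: norm_mult norm_power indicator_def intro!: mult_mono power_mono)
qed simp

lemma tendsto_integral_restrict_ball_mult_cnj:
  assumes r: "r \<longlonglongrightarrow> R" and [measurable]: "w \<in> borel_measurable borel"
    and w_bound: "\<And>z. z \<in> D \<Longrightarrow> norm (w z) \<le> B" and g: "g \<in> L2 M"
  shows "(\<lambda>N. integral\<^sup>L M (\<lambda>z. indicator (ball 0 (r N)) z * w z * cnj (g z)))
           \<longlonglongrightarrow> integral\<^sup>L M (\<lambda>z. w z * cnj (g z))"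
  unfolding mult.assoc
proof (rule tendsto_integral_restrict_ball[OF r])
  have [measurable]: "g \<in> borel_measurable borel"
    using g by (rule L2_measurable)
  show "(\<lambda>z. w z * cnj (g z)) \<in> borel_measurable borel"
    by measurable
  show "integrable M (\<lambda>z. B * norm (g z))"
    using integrable_L2[OF g] by (intro integrable_mult_right integrable_norm)
  show "norm (w z * cnj (g z)) \<le> B * norm (g z)" if "z \<in> D" for z
    unfolding norm_mult complex_mod_cnj using w_bound[OF that] by (rule mult_right_mono) simp
qed

lemma tendsto_integral_restrict_ball_taylor:
  fixes f w :: "complex \<Rightarrow> complex"
  assumes hol: "f holomorphic_on D" and [measurable]: "f \<in> borel_measurable borel"
    and [measurable]: "w \<in> borel_measurable borel" and w_bound: "\<And>z. z \<in> D \<Longrightarrow> norm (w z) \<le> B"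
    and r: "0 \<le> r" "r < R"
  shows "(\<lambda>N. integral\<^sup>L M (\<lambda>z. indicator (ball 0 r) z * w z * cnj (\<Sum>j<N. taylor_coeff f j * z ^ j)))
           \<longlonglongrightarrow> integral\<^sup>L M (\<lambda>z. indicator (ball 0 r) z * w z * cnj (f z))"
proof -
  define K where "K = (\<Sum>j. norm (taylor_coeff f j) * r ^ j)"
  have "0 \<le> K"
    unfolding K_def using summable_norm_taylor_coeff[OF hol r] r by (intro suminf_nonneg) auto
  have "0 \<le> B"
    using w_bound[of 0] R_pos by (auto intro: order_trans[OF norm_ge_zero])
  show ?thesis
  proof (rule integral_dominated_convergence[where w = "\<lambda>z. B * K"])
    show "AE z in M. (\<lambda>N. indicator (ball 0 r) z * w z * cnj (\<Sum>j<N. taylor_coeff f j * z ^ j))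
            \<longlonglongrightarrow> indicator (ball 0 r) z * w z * cnj (f z)"
    proof (rule AE_I2)
      fix z
      show "(\<lambda>N. indicator (ball 0 r) z * w z * cnj (\<Sum>j<N. taylor_coeff f j * z ^ j))
              \<longlonglongrightarrow> indicator (ball 0 r) z * w z * cnj (f z)"
      proof (cases "z \<in> ball 0 r")
        case True
        then have "(\<lambda>N. \<Sum>j<N. taylor_coeff f j * z ^ j) \<longlonglongrightarrow> f z"
          using taylor_coeff_sums[OF hol] r by (simp add: sums_def)
        then show ?thesis
          by (intro tendsto_mult_left tendsto_cnj)
      qed simp
    qed
    show "AE z in M. norm (indicator (ball 0 r) z * w z * cnj (\<Sum>j<N. taylor_coeff f j * z ^ j)) \<le> B * K"
      for N
    proof (rule AE_I2)
      fix z
      have "norm (\<Sum>j<N. taylor_coeff f j * z ^ j) \<le> K" if "z \<in> ball 0 r"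
        unfolding K_def using that r by (intro norm_taylor_partial_sum_le[OF hol]) auto
      then show "norm (indicator (ball 0 r) z * w z * cnj (\<Sum>j<N. taylor_coeff f j * z ^ j)) \<le> B * K"
        unfolding norm_mult complex_mod_cnj
        using w_bound[of z] \<open>0 \<le> B\<close> \<open>0 \<le> K\<close> r by (auto simp: indicator_def intro: mult_mono)
    qed
    show "(\<lambda>z. indicator (ball 0 r) z * w z * cnj (\<Sum>j<N. taylor_coeff f j * z ^ j)) \<in> borel_measurable M"
      for N by measurable
    show "integrable M (\<lambda>z. B * K)"
      by (rule finite_measure.integrable_const[OF finite_M])
  qed measurable
qed

lemma integral_restrict_ball_mult_cnj_sums:
  fixes f w :: "complex \<Rightarrow> complex"
  assumes hol: "f holomorphic_on D" and f_measurable: "f \<in> borel_measurable borel"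
    and w_measurable: "w \<in> borel_measurable borel" and w_bound: "\<And>z. z \<in> D \<Longrightarrow> norm (w z) \<le> B"
    and r: "0 \<le> r" "r < R"
  shows "(\<lambda>j. cnj (taylor_coeff f j) * integral\<^sup>L M (\<lambda>z. indicator (ball 0 r) z * w z * cnj (z ^ j)))
           sums integral\<^sup>L M (\<lambda>z. indicator (ball 0 r) z * w z * cnj (f z))"
proof -
  have term_integrable: "integrable M (\<lambda>z. indicator (ball 0 r) z * w z * cnj (z ^ j))" for j
    using w_bound w_measurable by (rule integrable_restrict_ball_mult_cnj_power)
  have "(\<lambda>z. indicator (ball 0 r) z * w z * cnj (\<Sum>j<N. taylor_coeff f j * z ^ j)) =
          (\<lambda>z. \<Sum>j<N. cnj (taylor_coeff f j) * (indicator (ball 0 r) z * w z * cnj (z ^ j)))" for N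
    by (simp add: cnj_sum sum_distrib_left mult_ac fun_eq_iff)
  then have "integral\<^sup>L M (\<lambda>z. indicator (ball 0 r) z * w z * cnj (\<Sum>j<N. taylor_coeff f j * z ^ j)) =
        (\<Sum>j<N. cnj (taylor_coeff f j) * integral\<^sup>L M (\<lambda>z. indicator (ball 0 r) z * w z * cnj (z ^ j)))" for N
    using term_integrable by (simp add: Bochner_Integration.integral_sum integral_mult_right_zero)
  with tendsto_integral_restrict_ball_taylor[OF hol f_measurable w_measurable w_bound r] show ?thesis
    by (simp add: sums_def)
qed

lemma integral_mult_cnj_holomorphic:
  fixes f w :: "complex \<Rightarrow> complex"
  assumes f: "f \<in> A2 M D"
    and w_measurable [measurable]: "w \<in> borel_measurable borel"
    and w_bound: "\<And>z. z \<in> D \<Longrightarrow> norm (w z) \<le> B"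
    and vanish: "\<And>j r. j \<noteq> k \<Longrightarrow> 0 \<le> r \<Longrightarrow> r < R \<Longrightarrow>
                   integral\<^sup>L M (\<lambda>z. indicator (ball 0 r) z * w z * cnj (z ^ j)) = 0"
  shows "integral\<^sup>L M (\<lambda>z. w z * cnj (f z)) = cnj (taylor_coeff f k) * integral\<^sup>L M (\<lambda>z. w z * cnj (z ^ k))"
proof -
  have f_L2: "f \<in> L2 M" and hol: "f holomorphic_on D"
    using f by (auto simp: A2_def)
  have f_measurable [measurable]: "f \<in> borel_measurable borel"
    using f_L2 by (rule L2_measurable)
  \<comment> \<open>the Taylor series of \<open>f\<close> is dominated only on smaller discs: integrate over those first\<close>
  obtain r where r_bounds: "\<And>N. 0 \<le> r N" "\<And>N. r N < R" and r_lim: "r \<longlonglongrightarrow> R"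
    using radii_tendsto[OF R_pos] by blast
  define I where "I N = integral\<^sup>L M (\<lambda>z. indicator (ball 0 (r N)) z * w z * cnj (f z))" for N
  define T where "T N = integral\<^sup>L M (\<lambda>z. indicator (ball 0 (r N)) z * w z * cnj (z ^ k))" for N
  have I_eq: "I N = cnj (taylor_coeff f k) * T N" for N
  proof -
    have "(\<lambda>j. cnj (taylor_coeff f j) * integral\<^sup>L M (\<lambda>z. indicator (ball 0 (r N)) z * w z * cnj (z ^ j)))
            sums I N"
      unfolding I_def using hol f_measurable w_measurable w_bound r_bounds(1,2)
      by (rule integral_restrict_ball_mult_cnj_sums)
    also have "(\<lambda>j. cnj (taylor_coeff f j) * integral\<^sup>L M (\<lambda>z. indicator (ball 0 (r N)) z * w z * cnj (z ^ j)))
            = (\<lambda>j. if j = k then cnj (taylor_coeff f k) * T N else 0)"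
      using vanish[OF _ r_bounds(1,2)] by (simp add: T_def fun_eq_iff)
    finally show ?thesis
      using sums_single[of k "\<lambda>_. cnj (taylor_coeff f k) * T N"] sums_unique2 by blast
  qed
  have I_lim: "I \<longlonglongrightarrow> integral\<^sup>L M (\<lambda>z. w z * cnj (f z))"
    unfolding I_def[abs_def] using r_lim w_measurable w_bound f_L2
    by (rule tendsto_integral_restrict_ball_mult_cnj)
  have "(\<lambda>z. z ^ k) \<in> L2 M"
    by (rule L2_continuous) (intro continuous_intros)
  with r_lim w_measurable w_bound have "T \<longlonglongrightarrow> integral\<^sup>L M (\<lambda>z. w z * cnj (z ^ k))"
    unfolding T_def[abs_def] by (rule tendsto_integral_restrict_ball_mult_cnj)
  then have "I \<longlonglongrightarrow> cnj (taylor_coeff f k) * integral\<^sup>L M (\<lambda>z. w z * cnj (z ^ k))"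
    unfolding I_eq[abs_def] by (rule tendsto_mult_left)
  with I_lim show ?thesis
    by (rule LIMSEQ_unique)
qed

end

section \<open>Radial weights with an orthogonal basis of monomials\<close>

lemma monomial_mult_cnj: "z ^ n * cnj (z ^ n) = complex_of_real (cmod z ^ (2 * n))"
proof -
  have "z ^ n * cnj (z ^ n) = (z * cnj z) ^ n"
    by (simp add: power_mult_distrib)
  also have "z * cnj z = complex_of_real (cmod z ^ 2)"
    by (simp only: complex_norm_square)
  finally show ?thesis
    by (simp only: of_real_power power_mult)
qed

lemma power_sq_mult_diff_sq:
  fixes t a :: real
  shows "(t ^ k)\<^sup>2 * (t\<^sup>2 - a)\<^sup>2 = t ^ (2 * Suc (Suc k)) - 2 * a * t ^ (2 * Suc k) + a\<^sup>2 * t ^ (2 * k)"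
proof -
  have "t ^ (2 * k) = (t ^ k)\<^sup>2"
    by (metis power_mult mult.commute)
  moreover have "t ^ (2 * Suc k) = t ^ (2 * k) * t\<^sup>2" "t ^ (2 * Suc (Suc k)) = t ^ (2 * k) * t\<^sup>2 * t\<^sup>2"
    by (simp_all add: power_add mult_Suc_right power2_eq_square)
  ultimately show ?thesis
    by (simp add: power2_eq_square algebra_simps)
qed

locale radial_bergman = radial_weight +
  assumes monomials_basis: "monomials_orthogonal_basis (wmeasure m (ball 0 R)) (ball 0 R)"
begin

lemma monomial_A2: "(\<lambda>z. z ^ n) \<in> A2 M D"
  using monomials_basis by (simp add: monomials_orthogonal_basis_def)

lemma finite_measure_M: "finite_measure M"
proof
  have "integrable M (\<lambda>z. (cmod (z ^ 0))\<^sup>2)"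
    using monomial_A2[of 0] by (simp add: A2_def L2_def)
  then have "(\<integral>\<^sup>+ z. ennreal 1 \<partial>M) < \<infinity>"
    using integrableD(2)[of M "\<lambda>z. 1::real"] by (simp add: less_top)
  then show "emeasure M (space M) \<noteq> \<infinity>"
    by (simp add: nn_integral_const)
qed

sublocale finite_radial_weight
  using radial_weight_axioms finite_measure_M
  by (rule finite_radial_weight.intro[OF _ finite_radial_weight_axioms.intro])

definition moment :: "nat \<Rightarrow> real" where
  "moment n = integral\<^sup>L M (\<lambda>z. cmod z ^ (2 * n))"

lemma integrable_norm_power: "integrable M (\<lambda>z. cmod z ^ k)"
  by (rule integrable_bounded_on_disc[where B = "R ^ k"]) (auto intro!: power_mono)

lemma L2_inner_monomial: "L2_inner M (\<lambda>z. z ^ n) (\<lambda>z. z ^ n) = moment n"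
  unfolding L2_inner_def moment_def by (simp only: monomial_mult_cnj integral_complex_of_real)

lemma moment_pos: "0 < moment n"
proof -
  have "moment n \<noteq> 0"
    using monomials_basis L2_inner_monomial[of n] by (auto simp: monomials_orthogonal_basis_def)
  moreover have "0 \<le> moment n"
    unfolding moment_def by (rule Bochner_Integration.integral_nonneg) simp
  ultimately show ?thesis
    by simp
qed

definition normalized_monomial :: "nat \<Rightarrow> complex \<Rightarrow> complex" where
  "normalized_monomial n z = z ^ n / sqrt (moment n)"

lemma normalized_monomial_A2: "normalized_monomial n \<in> A2 M D"
  unfolding A2_def normalized_monomial_def[abs_def] using moment_pos[of n]
  by (auto intro!: holomorphic_intros L2_continuous continuous_intros)

lemma L2_inner_normalized_monomial:
  "L2_inner M g (normalized_monomial n) = L2_inner M g (\<lambda>z. z ^ n) / sqrt (moment n)"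
  by (simp add: L2_inner_def normalized_monomial_def integral_divide_zero)

lemma L2_inner_normalized_monomials:
  "L2_inner M (normalized_monomial n) (normalized_monomial k) =
     L2_inner M (\<lambda>z. z ^ n) (\<lambda>z. z ^ k) / (sqrt (moment n) * sqrt (moment k))"
  by (simp add: L2_inner_def normalized_monomial_def integral_divide_zero)

lemma L2_inner_normalized_monomial_eq:
  "L2_inner M (normalized_monomial n) (normalized_monomial k) = (if n = k then 1 else 0)"
  using monomials_basis moment_pos[of n] moment_pos[of k]
  by (simp add: L2_inner_normalized_monomials L2_inner_monomial monomials_orthogonal_basis_def
      real_sqrt_mult_self flip: of_real_mult)

lemma inj_normalized_monomial: "inj normalized_monomial"
  by (rule injI) (metis L2_inner_normalized_monomial_eq zero_neq_one)

lemma orthonormal_basis_normalized_monomials: "A2_orthonormal_basis M D (range normalized_monomial)"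
  unfolding A2_orthonormal_basis_def
proof (intro conjI ballI impI)
  fix g assume "g \<in> A2 M D" and orth: "\<forall>e \<in> range normalized_monomial. L2_inner M g e = 0"
  have "L2_inner M g (\<lambda>z. z ^ n) = 0" for n
  proof -
    have "L2_inner M g (normalized_monomial n) = 0"
      using orth by blast
    then show ?thesis
      using moment_pos[of n] by (simp add: L2_inner_normalized_monomial)
  qed
  then show "AE z in M. g z = 0"
    using monomials_basis \<open>g \<in> A2 M D\<close> by (simp add: monomials_orthogonal_basis_def)
qed (auto simp: normalized_monomial_A2 L2_inner_normalized_monomial_eq)

definition moment_ratio :: "nat \<Rightarrow> real" where
  "moment_ratio n = (if n = 0 then 0 else moment n / moment (n - 1))"

(* For n = 0 the Bergman projection of cnj z * e_0 is 0: moment_ratio 0 = 0 makes the truncated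
   exponent 0 - 1 irrelevant. *)

definition monomial_solution :: "nat \<Rightarrow> complex \<Rightarrow> complex" where
  "monomial_solution n z =
     cnj z * normalized_monomial n z - complex_of_real (moment_ratio n / sqrt (moment n)) * z ^ (n - 1)"

lemma monomial_solution_0: "monomial_solution 0 z = cnj z / sqrt (moment 0)"
  by (simp add: monomial_solution_def moment_ratio_def normalized_monomial_def)

lemma monomial_solution_Suc:
  "monomial_solution (Suc k) z =
     z ^ k * complex_of_real ((cmod z ^ 2 - moment_ratio (Suc k)) / sqrt (moment (Suc k)))"
proof -
  have "z * cnj z = complex_of_real (cmod z ^ 2)"
    by (simp only: complex_norm_square)
  then have "cnj z * z ^ Suc k = z ^ k * complex_of_real (cmod z ^ 2)"
    by (simp add: algebra_simps)
  then show ?thesis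
    by (simp add: monomial_solution_def normalized_monomial_def diff_divide_distrib algebra_simps)
qed

lemma continuous_monomial_solution: "continuous_on UNIV (monomial_solution n)"
  unfolding monomial_solution_def[abs_def] normalized_monomial_def
  by (intro continuous_intros) (use moment_pos[of n] in simp)

lemma monomial_solution_measurable [measurable]: "monomial_solution n \<in> borel_measurable borel"
  by (rule borel_measurable_continuous_onI[OF continuous_monomial_solution])

lemma monomial_solution_rotation:
  assumes c: "norm c = 1"
  shows "monomial_solution n (c * z) = c ^ n * cnj c ^ 1 * monomial_solution n z"
proof (cases n)
  case 0
  then show ?thesis
    by (simp add: monomial_solution_0)
next
  case (Suc k)
  have "c * cnj c = 1"
    using c by (simp flip: complex_norm_square)
  then have "c ^ Suc k * cnj c ^ 1 = c ^ k"
    by (simp add: mult.assoc)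
  moreover have "monomial_solution (Suc k) (c * z) = c ^ k * monomial_solution (Suc k) z"
    by (simp only: monomial_solution_Suc norm_mult c mult_1 power_mult_distrib mult.assoc)
  ultimately show ?thesis
    using Suc by simp
qed

lemma integral_monomial_solution_Suc_mult_cnj:
  "integral\<^sup>L M (\<lambda>z. monomial_solution (Suc k) z * cnj (z ^ k)) = 0"
proof -
  define a where "a = moment_ratio (Suc k)"
  define c where "c = sqrt (moment (Suc k))"
  have "monomial_solution (Suc k) z * cnj (z ^ k) =
          complex_of_real ((cmod z ^ (2 * Suc k) - a * cmod z ^ (2 * k)) / c)" for z
  proof -
    have "monomial_solution (Suc k) z * cnj (z ^ k) =
            (z ^ k * cnj (z ^ k)) * complex_of_real ((cmod z ^ 2 - a) / c)"
      by (simp add: monomial_solution_Suc a_def c_def)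
    also have "\<dots> = complex_of_real (cmod z ^ (2 * k) * ((cmod z ^ 2 - a) / c))"
      by (simp only: monomial_mult_cnj of_real_mult)
    finally show ?thesis
      by (simp add: algebra_simps diff_divide_distrib power_add mult_2 power2_eq_square)
  qed
  then have "integral\<^sup>L M (\<lambda>z. monomial_solution (Suc k) z * cnj (z ^ k)) =
               complex_of_real (integral\<^sup>L M (\<lambda>z. (cmod z ^ (2 * Suc k) - a * cmod z ^ (2 * k)) / c))"
    by (simp only: integral_complex_of_real)
  also have "integral\<^sup>L M (\<lambda>z. (cmod z ^ (2 * Suc k) - a * cmod z ^ (2 * k)) / c) =
               (moment (Suc k) - a * moment k) / c"
    unfolding moment_def
    by (simp only: integral_divide_zero integral_mult_right_zero
        Bochner_Integration.integral_diff[OF integrable_norm_power integrable_mult_right[OF integrable_norm_power]])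
  also have "moment (Suc k) - a * moment k = 0"
    using moment_pos[of k] by (simp add: a_def moment_ratio_def)
  finally show ?thesis
    by simp
qed

lemma monomial_solution_orthogonal:
  assumes f: "f \<in> A2 M D"
  shows "L2_inner M (monomial_solution n) f = 0"
proof -
  obtain B where bound: "\<And>z. z \<in> D \<Longrightarrow> norm (monomial_solution n z) \<le> B"
    using continuous_bounded_on_ball[OF continuous_monomial_solution] by blast
  have rotation: "monomial_solution n (c * z) * cnj ((c * z) ^ j) =
                    c ^ n * cnj c ^ Suc j * (monomial_solution n z * cnj (z ^ j))" if "norm c = 1" for c z j
    using that by (simp add: monomial_solution_rotation power_mult_distrib)
  have vanish: "integral\<^sup>L M (\<lambda>z. indicator (ball 0 r) z * monomial_solution n z * cnj (z ^ j)) = 0"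
    if "n \<noteq> Suc j" for j r
  proof (rule integral_homogeneous_eq_0[OF _ _ that])
    show "indicator (ball 0 r) (c * z) * monomial_solution n (c * z) * cnj ((c * z) ^ j) =
            c ^ n * cnj c ^ Suc j * (indicator (ball 0 r) z * monomial_solution n z * cnj (z ^ j))"
      if "norm c = 1" for c z
      using rotation[OF that] that by (simp add: indicator_def norm_mult)
  qed measurable
  have "L2_inner M (monomial_solution n) f =
          cnj (taylor_coeff f (n - 1)) * integral\<^sup>L M (\<lambda>z. monomial_solution n z * cnj (z ^ (n - 1)))"
    unfolding L2_inner_def
    by (rule integral_mult_cnj_holomorphic[OF f _ bound vanish]) auto
  also have "integral\<^sup>L M (\<lambda>z. monomial_solution n z * cnj (z ^ (n - 1))) = 0"
  proof (cases n)
    case 0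
    show ?thesis
      by (rule integral_homogeneous_eq_0[where p = n and q = 1])
        (use 0 in \<open>auto simp: monomial_solution_rotation intro: monomial_solution_measurable\<close>)
  qed (use integral_monomial_solution_Suc_mult_cnj in simp)
  finally show ?thesis
    by simp
qed

lemma canonical_solution_monomial:
  "canonical_solution M D (normalized_monomial n) (monomial_solution n)"
  unfolding canonical_solution_def
proof (intro conjI ballI bexI)
  show "monomial_solution n \<in> L2 M"
    by (rule L2_continuous[OF continuous_monomial_solution])
  show "(\<lambda>z. complex_of_real (moment_ratio n / sqrt (moment n)) * z ^ (n - 1)) \<in> A2 M D"
    unfolding A2_def using moment_pos[of n] by (auto intro!: holomorphic_intros L2_continuous continuous_intros)
  show "monomial_solution n z =
          cnj z * normalized_monomial n z - complex_of_real (moment_ratio n / sqrt (moment n)) * z ^ (n - 1)"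
    for z
    by (simp add: monomial_solution_def)
qed (rule monomial_solution_orthogonal)

lemma integral_norm_sq_monomial_solution:
  "integral\<^sup>L M (\<lambda>z. (cmod (monomial_solution n z))\<^sup>2) = moment_ratio (Suc n) - moment_ratio n"
proof (cases n)
  case 0
  have "(cmod (monomial_solution 0 z))\<^sup>2 = cmod z ^ (2 * 1) / moment 0" for z
    using moment_pos[of 0] by (simp add: monomial_solution_0 norm_divide power_divide)
  then have "integral\<^sup>L M (\<lambda>z. (cmod (monomial_solution 0 z))\<^sup>2) = moment 1 / moment 0"
    unfolding moment_def by (simp only: integral_divide_zero)
  then show ?thesis
    using 0 by (simp add: moment_ratio_def)
next
  case (Suc k)
  define a where "a = moment_ratio (Suc k)"
  have "cmod (monomial_solution (Suc k) z) = cmod z ^ k * \<bar>(cmod z ^ 2 - a) / sqrt (moment (Suc k))\<bar>" for z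
    by (simp only: monomial_solution_Suc norm_mult norm_power norm_of_real a_def)
  then have "(cmod (monomial_solution (Suc k) z))\<^sup>2 =
               (cmod z ^ k)\<^sup>2 * (cmod z ^ 2 - a)\<^sup>2 / moment (Suc k)" for z
    using moment_pos[of "Suc k"] by (simp add: power_mult_distrib power_divide)
  also have "\<dots> z = (cmod z ^ (2 * Suc (Suc k)) - 2 * a * cmod z ^ (2 * Suc k) + a\<^sup>2 * cmod z ^ (2 * k))
                  / moment (Suc k)" for z
    by (simp only: power_sq_mult_diff_sq)
  finally have "integral\<^sup>L M (\<lambda>z. (cmod (monomial_solution n z))\<^sup>2) =
                  (moment (Suc (Suc k)) - 2 * a * moment (Suc k) + a\<^sup>2 * moment k) / moment (Suc k)"
    unfolding moment_def Suc
    by (simp only: integral_divide_zero integral_mult_right_zero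
        Bochner_Integration.integral_add[OF Bochner_Integration.integrable_diff[OF integrable_norm_power
          integrable_mult_right[OF integrable_norm_power]] integrable_mult_right[OF integrable_norm_power]]
        Bochner_Integration.integral_diff[OF integrable_norm_power integrable_mult_right[OF integrable_norm_power]])
  also have "\<dots> = moment_ratio (Suc n) - moment_ratio n"
    using moment_pos[of k] moment_pos[of "Suc k"] Suc
    by (simp add: a_def moment_ratio_def field_simps power2_eq_square)
  finally show ?thesis .
qed

lemma norm_sq_canon_sol_op_normalized_monomial:
  "(L2_norm M (canon_sol_op M D (normalized_monomial n)))\<^sup>2 = moment_ratio (Suc n) - moment_ratio n"
proof -
  have canonical: "canonical_solution M D (normalized_monomial n) (canon_sol_op M D (normalized_monomial n))"
    unfolding canon_sol_op_def by (rule someI[of _ "monomial_solution n"]) (rule canonical_solution_monomial)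
  then have [measurable]: "canon_sol_op M D (normalized_monomial n) \<in> borel_measurable borel"
    by (auto simp: canonical_solution_def intro: L2_measurable)
  have "AE z in M. canon_sol_op M D (normalized_monomial n) z = monomial_solution n z"
    using canonical canonical_solution_monomial by (rule canonical_solution_unique)
  then have "integral\<^sup>L M (\<lambda>z. (cmod (canon_sol_op M D (normalized_monomial n) z))\<^sup>2) =
               integral\<^sup>L M (\<lambda>z. (cmod (monomial_solution n z))\<^sup>2)"
    by (intro integral_cong_AE) (measurable, auto elim: eventually_mono)
  moreover have "0 \<le> integral\<^sup>L M (\<lambda>z. (cmod (monomial_solution n z))\<^sup>2)"
    by (rule Bochner_Integration.integral_nonneg) simp
  ultimately show ?thesis
    by (simp add: L2_norm_def integral_norm_sq_monomial_solution)
qed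

lemma incseq_moment_ratio: "incseq moment_ratio"
proof (rule incseq_SucI)
  fix n
  show "moment_ratio n \<le> moment_ratio (Suc n)"
    using norm_sq_canon_sol_op_normalized_monomial[of n] zero_le_power2 by (metis diff_ge_0_iff_ge)
qed

lemma moment_ratio_le: "moment_ratio n \<le> R\<^sup>2"
proof (cases n)
  case (Suc k)
  have "moment (Suc k) \<le> integral\<^sup>L M (\<lambda>z. R\<^sup>2 * cmod z ^ (2 * k))"
    unfolding moment_def
  proof (rule integral_mono_AE[OF integrable_norm_power integrable_mult_right[OF integrable_norm_power]])
    show "AE z in M. cmod z ^ (2 * Suc k) \<le> R\<^sup>2 * cmod z ^ (2 * k)"
      using AE_in_disc
    proof eventually_elim
      fix z assume "z \<in> D"
      then have "cmod z ^ 2 \<le> R ^ 2"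
        by (intro power_mono) auto
      moreover have "cmod z ^ (2 * Suc k) = cmod z ^ 2 * cmod z ^ (2 * k)"
        by (simp only: mult_Suc_right power_add)
      ultimately show "cmod z ^ (2 * Suc k) \<le> R\<^sup>2 * cmod z ^ (2 * k)"
        by (metis mult_right_mono norm_ge_zero zero_le_power)
    qed
  qed
  also have "\<dots> = R\<^sup>2 * moment k"
    unfolding moment_def by (rule integral_mult_right_zero)
  finally show ?thesis
    using Suc moment_pos[of k] by (simp add: moment_ratio_def pos_divide_le_eq)
qed (simp add: moment_ratio_def)

lemma convergent_moment_ratio: "convergent moment_ratio"
  using incseq_convergent[OF incseq_moment_ratio, of "R\<^sup>2"] moment_ratio_le
  by (metis convergent_def)

lemma hilbert_schmidt_canon_sol_op:
  assumes "convergent moment_ratio"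
  shows "hilbert_schmidt_A2 M D (canon_sol_op M D)"
  unfolding hilbert_schmidt_A2_def
proof (intro exI conjI)
  show "A2_orthonormal_basis M D (range normalized_monomial)"
    by (rule orthonormal_basis_normalized_monomials)
  define N where "N = (\<lambda>n. (L2_norm M (canon_sol_op M D (normalized_monomial n)))\<^sup>2)"
  have "(\<Sum>n<K. N n) = moment_ratio K - moment_ratio 0" for K
    by (simp only: N_def norm_sq_canon_sol_op_normalized_monomial sum_lessThan_telescope)
  then have "(\<Sum>n<K. N n) = moment_ratio K" for K
    by (simp add: moment_ratio_def)
  then have "summable N"
    using assms by (simp add: summable_iff_convergent)
  then have "N summable_on UNIV"
    by (rule summable_nonneg_imp_summable_on) (simp add: N_def)
  then show "(\<lambda>e. (L2_norm M (canon_sol_op M D e))\<^sup>2) summable_on range normalized_monomial"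
    by (simp add: summable_on_reindex[OF inj_normalized_monomial] N_def comp_def)
qed

end

theorem theorem2p1:
  fixes R :: real and m :: "complex \<Rightarrow> real"
  assumes "0 < R"
    and "m \<in> borel_measurable borel"
    and "\<And>z. m z \<ge> 0"
    and "\<And>z w. cmod z = cmod w \<Longrightarrow> m z = m w"
    and "monomials_orthogonal_basis (wmeasure m (ball 0 R)) (ball 0 R)"
  shows "hilbert_schmidt_A2 (wmeasure m (ball 0 R)) (ball 0 R)
           (canon_sol_op (wmeasure m (ball 0 R)) (ball 0 R))
         \<longleftrightarrow>
         (\<exists>L::real. (\<lambda>n. integral\<^sup>L (wmeasure m (ball 0 R)) (\<lambda>z. cmod z ^ (2 * Suc n))
                       / integral\<^sup>L (wmeasure m (ball 0 R)) (\<lambda>z. cmod z ^ (2 * n)))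
                   \<longlonglongrightarrow> L)"
proof -
  interpret radial_bergman R m
    using assms by unfold_locales
  have "(\<lambda>n. integral\<^sup>L M (\<lambda>z. cmod z ^ (2 * Suc n)) / integral\<^sup>L M (\<lambda>z. cmod z ^ (2 * n))) =
          (\<lambda>n. moment_ratio (Suc n))"
    by (simp add: moment_ratio_def moment_def)
  moreover have "convergent (\<lambda>n. moment_ratio (Suc n))"
    using convergent_moment_ratio by (simp only: convergent_Suc_iff)
  ultimately show ?thesis
    using hilbert_schmidt_canon_sol_op[OF convergent_moment_ratio] by (simp add: convergent_def)
qed

end
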